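(* Let $K_1,\dots,K_n\colon\mathbb{E}(D)\to\mathbb{E}(D)$ be affine functions. Then $$\mu X.\,\min\{K_1(X),\dots,K_n(X)\}\;=\;\inf_{\substack{t_1,\dots,t_n\colon D\to[0,1]\\ t_1+\dots+t_n=\mathbb{1}}}\ \mu X.\,\sum_{i=1}^n t_i\cdot K_i(X).$$
   Context: $\mathbb{E}(D)$ is the set of functions $D\to[0,\infty]$ with pointwise order and operations ($\infty+x=\infty$, $0\cdot\infty=0$, $r\cdot\infty=\infty$ for $r>0$); $\min$ and the products $t_i\cdot K_i(X)$ are taken pointwise; $\mathbb{1}$ is the constant function $1$. $K$ is affine if $K(\alpha\eta_1+(1-\alpha)\eta_2)=\alpha K(\eta_1)+(1-\alpha)K(\eta_2)$ for all $\eta_1,\eta_2$ and $\alpha\in[0,1]$. $\mu X.\,G(X)$ denotes the least fixed point of a monotone $G$ on the complete lattice $\mathbb{E}(D)$. *)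

theory Defs
  imports Main "HOL-Library.Extended_Nonnegative_Real"
begin

text \<open>E(D) is rendered as the type 'd \<Rightarrow> ennreal (pointwise order, complete lattice).
  A map K on E(D) is affine if it preserves binary convex combinations with weights in [0,1].\<close>

definition affine_E :: "(('d \<Rightarrow> ennreal) \<Rightarrow> ('d \<Rightarrow> ennreal)) \<Rightarrow> bool" where
  "affine_E K \<longleftrightarrow>
     (\<forall>\<eta>1 \<eta>2 (\<alpha>::ennreal). \<alpha> \<le> 1 \<longrightarrow>
        K (\<lambda>d. \<alpha> * \<eta>1 d + (1 - \<alpha>) * \<eta>2 d) = (\<lambda>d. \<alpha> * K \<eta>1 d + (1 - \<alpha>) * K \<eta>2 d))"

end

theory Submission
  imports Defs
begin

text \<open>A minimum never exceeds a convex combination and lfp is monotone in the operator, so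
  the left-hand side lies below every term of the infimum. Conversely, let L be the least fixed
  point of the minimum operator and pick, at every point d, an index attaining the minimum at L:
  the resulting 0/1-valued weighting makes L a fixed point of its weighted-sum operator, whose
  least fixed point therefore lies below L. That L is a fixed point needs the minimum operator to
  be monotone, which holds because affine maps are: for \<open>\<eta>\<^sub>1 \<le> \<eta>\<^sub>2\<close> and
  \<open>0 < \<alpha> \<le> 1\<close>, \<open>\<eta>\<^sub>2\<close> is the convex combination \<open>\<alpha> \<eta>\<^sub>3 + (1 - \<alpha>) \<eta>\<^sub>1\<close>
  with \<open>\<eta>\<^sub>3 = \<eta>\<^sub>1 + (\<eta>\<^sub>2 - \<eta>\<^sub>1) / \<alpha>\<close>, so \<open>K \<eta>\<^sub>2 \<ge> (1 - \<alpha>) K \<eta>\<^sub>1\<close>; now let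
  \<open>\<alpha>\<close> tend to 0.\<close>

definition weightings :: "'i set \<Rightarrow> ('i \<Rightarrow> 'd \<Rightarrow> ennreal) set" where
  "weightings I = {t. (\<forall>i\<in>I. \<forall>d. t i d \<le> 1) \<and> (\<forall>d. (\<Sum>i\<in>I. t i d) = 1)}"

lemma ennreal_le_mult_one_interval:
  fixes x y :: ennreal
  assumes scaled: "\<And>z::real. 0 < z \<Longrightarrow> z < 1 \<Longrightarrow> ennreal z * x \<le> y"
  shows "x \<le> y"
proof (cases y rule: ennreal_cases)
  case (real b)
  have "ennreal (1/2) * x < top"
    using scaled[of "1/2"] real by (simp add: le_less_trans)
  then have "x < top"
    by (auto simp: ennreal_mult_less_top)
  then obtain a where a: "0 \<le> a" "x = ennreal a"
    by (cases x rule: ennreal_cases) auto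
  have "a \<le> b"
  proof (rule field_le_mult_one_interval)
    fix z :: real assume "0 < z" "z < 1"
    then show "z * a \<le> b"
      using scaled[of z] a real by (simp add: ennreal_mult[symmetric])
  qed
  then show ?thesis using a real by simp
qed simp

lemma ennreal_convex_split:
  fixes a b \<alpha> :: ennreal
  assumes "a \<le> b" "\<alpha> \<noteq> 0" "\<alpha> \<le> 1"
  shows "\<alpha> * (a + (b - a) / \<alpha>) + (1 - \<alpha>) * a = b"
proof -
  have "\<alpha> < top" using \<open>\<alpha> \<le> 1\<close> by (simp add: le_less_trans)
  then have "\<alpha> * ((b - a) / \<alpha>) = b - a"
    using \<open>\<alpha> \<noteq> 0\<close> by (metis ennreal_divide_self ennreal_divide_times mult_1)
  then have "\<alpha> * (a + (b - a) / \<alpha>) + (1 - \<alpha>) * a = (\<alpha> + (1 - \<alpha>)) * a + (b - a)"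
    by (simp add: algebra_simps)
  also have "\<dots> = b"
    using assms by (simp add: add_diff_inverse_ennreal)
  finally show ?thesis .
qed

lemma affine_E_mono:
  fixes K :: "('d \<Rightarrow> ennreal) \<Rightarrow> ('d \<Rightarrow> ennreal)"
  assumes "affine_E K"
  shows "mono K"
proof (rule monoI, rule le_funI)
  fix \<eta>\<^sub>1 \<eta>\<^sub>2 :: "'d \<Rightarrow> ennreal" and d
  assume "\<eta>\<^sub>1 \<le> \<eta>\<^sub>2"
  show "K \<eta>\<^sub>1 d \<le> K \<eta>\<^sub>2 d"
  proof (rule ennreal_le_mult_one_interval)
    fix z :: real assume "0 < z" "z < 1"
    define \<alpha> where "\<alpha> = ennreal (1 - z)"
    define \<eta>\<^sub>3 where "\<eta>\<^sub>3 = (\<lambda>d. \<eta>\<^sub>1 d + (\<eta>\<^sub>2 d - \<eta>\<^sub>1 d) / \<alpha>)"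
    have \<alpha>: "\<alpha> \<noteq> 0" "\<alpha> \<le> 1" "1 - \<alpha> = ennreal z"
      using \<open>0 < z\<close> \<open>z < 1\<close> by (auto simp: \<alpha>_def ennreal_minus simp flip: ennreal_1)
    have "(\<lambda>d. \<alpha> * \<eta>\<^sub>3 d + (1 - \<alpha>) * \<eta>\<^sub>1 d) = \<eta>\<^sub>2"
      unfolding \<eta>\<^sub>3_def using \<open>\<eta>\<^sub>1 \<le> \<eta>\<^sub>2\<close> \<alpha>(1,2)
      by (intro ext ennreal_convex_split) (auto simp: le_fun_def)
    then have "K \<eta>\<^sub>2 = (\<lambda>d. \<alpha> * K \<eta>\<^sub>3 d + (1 - \<alpha>) * K \<eta>\<^sub>1 d)"
      using assms \<alpha>(2) unfolding affine_E_def by metis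
    then show "ennreal z * K \<eta>\<^sub>1 d \<le> K \<eta>\<^sub>2 d"
      using \<alpha>(3) by simp
  qed
qed

lemma mono_pointwise_Min:
  fixes K :: "'i \<Rightarrow> 'x::order \<Rightarrow> 'a \<Rightarrow> 'b::linorder"
  assumes "finite I" "\<And>i. i \<in> I \<Longrightarrow> mono (K i)"
  shows "mono (\<lambda>X d. Min ((\<lambda>i. K i X d) ` I))"
proof (rule monoI, rule le_funI)
  fix X Y :: 'x and d
  assume "X \<le> Y"
  show "Min ((\<lambda>i. K i X d) ` I) \<le> Min ((\<lambda>i. K i Y d) ` I)"
  proof (cases "I = {}")
    case False
    have "Min ((\<lambda>i. K i X d) ` I) \<le> K i Y d" if "i \<in> I" for i
    proof -
      have "Min ((\<lambda>i. K i X d) ` I) \<le> K i X d"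
        using assms(1) that by simp
      also have "\<dots> \<le> K i Y d"
        using assms(2)[OF that] \<open>X \<le> Y\<close> by (simp add: monoD le_funD)
      finally show ?thesis .
    qed
    then show ?thesis
      using False assms(1) by simp
  qed simp
qed

lemma Min_le_convex_combination:
  fixes f t :: "'i \<Rightarrow> 'a :: linordered_nonzero_semiring"
  assumes "finite I" "\<And>i. i \<in> I \<Longrightarrow> 0 \<le> t i" "(\<Sum>i\<in>I. t i) = 1"
  shows "Min (f ` I) \<le> (\<Sum>i\<in>I. t i * f i)"
proof -
  have "Min (f ` I) = (\<Sum>i\<in>I. t i * Min (f ` I))"
    using assms(3) by (simp add: sum_distrib_right[symmetric])
  also have "\<dots> \<le> (\<Sum>i\<in>I. t i * f i)"
    using assms(1,2) by (intro sum_mono mult_left_mono) auto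
  finally show ?thesis .
qed

lemma lfp_pointwise_Min_le_lfp_weighted_sum:
  fixes K :: "'i \<Rightarrow> ('d \<Rightarrow> ennreal) \<Rightarrow> ('d \<Rightarrow> ennreal)"
  assumes "finite I" "t \<in> weightings I"
  shows "lfp (\<lambda>X d. Min ((\<lambda>i. K i X d) ` I)) \<le> lfp (\<lambda>X d. \<Sum>i\<in>I. t i d * K i X d)"
proof (intro lfp_mono le_funI)
  fix X d
  show "Min ((\<lambda>i. K i X d) ` I) \<le> (\<Sum>i\<in>I. t i d * K i X d)"
    using assms by (intro Min_le_convex_combination[of I "\<lambda>i. t i d"]) (auto simp: weightings_def)
qed

lemma pointwise_Min_eq_weighted_sum:
  fixes K :: "'i \<Rightarrow> ('d \<Rightarrow> ennreal) \<Rightarrow> ('d \<Rightarrow> ennreal)"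
  assumes "finite I" "I \<noteq> {}"
  obtains t where "t \<in> weightings I"
    and "(\<lambda>d. \<Sum>i\<in>I. t i d * K i X d) = (\<lambda>d. Min ((\<lambda>i. K i X d) ` I))"
proof -
  have "\<exists>j\<in>I. K j X d = Min ((\<lambda>i. K i X d) ` I)" for d
  proof -
    have "Min ((\<lambda>i. K i X d) ` I) \<in> (\<lambda>i. K i X d) ` I"
      using assms by (intro Min_in) auto
    then show ?thesis by auto
  qed
  then obtain s where s: "\<And>d. s d \<in> I" "\<And>d. K (s d) X d = Min ((\<lambda>i. K i X d) ` I)"
    by metis
  define t where "t = (\<lambda>i d. if i = s d then 1 else 0 :: ennreal)"
  have select: "(\<Sum>i\<in>I. t i d * f i) = f (s d)" for d and f :: "'i \<Rightarrow> ennreal"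
  proof -
    have "(\<Sum>i\<in>I. t i d * f i) = (\<Sum>i\<in>I. if i = s d then f i else 0)"
      by (intro sum.cong) (auto simp: t_def)
    also have "\<dots> = f (s d)"
      using s(1)[of d] assms(1) by (simp add: sum.delta)
    finally show ?thesis .
  qed
  have "t \<in> weightings I"
    using select[where f = "\<lambda>_. 1"] by (auto simp: weightings_def t_def)
  moreover have "(\<lambda>d. \<Sum>i\<in>I. t i d * K i X d) = (\<lambda>d. Min ((\<lambda>i. K i X d) ` I))"
    using select s(2) by simp
  ultimately show ?thesis by (rule that)
qed

theorem propositionE3:
  fixes K :: "nat \<Rightarrow> ('d \<Rightarrow> ennreal) \<Rightarrow> ('d \<Rightarrow> ennreal)" and n :: nat
  assumes "n \<ge> 1"
    and "\<forall>i\<in>{1..n}. affine_E (K i)"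
  shows "lfp (\<lambda>X d. Min ((\<lambda>i. K i X d) ` {1..n})) =
         (INF t\<in>{t :: nat \<Rightarrow> 'd \<Rightarrow> ennreal.
                    (\<forall>i\<in>{1..n}. \<forall>d. t i d \<le> 1) \<and> (\<forall>d. (\<Sum>i=1..n. t i d) = 1)}.
            lfp (\<lambda>X d. \<Sum>i=1..n. t i d * K i X d))"
proof -
  let ?L = "lfp (\<lambda>X d. Min ((\<lambda>i. K i X d) ` {1..n}))"
  let ?G = "\<lambda>t. lfp (\<lambda>X d. \<Sum>i=1..n. t i d * K i X d)"
  have "mono (\<lambda>X d. Min ((\<lambda>i. K i X d) ` {1..n}))"
    using assms(2) by (intro mono_pointwise_Min affine_E_mono) auto
  then have fixpoint: "(\<lambda>d. Min ((\<lambda>i. K i ?L d) ` {1..n})) = ?L"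
    by (rule lfp_fixpoint)
  have "finite {1..n}" "{1..n} \<noteq> {}"
    using assms(1) by auto
  then obtain s where s: "s \<in> weightings {1..n}"
    and realises: "(\<lambda>d. \<Sum>i=1..n. s i d * K i ?L d) = (\<lambda>d. Min ((\<lambda>i. K i ?L d) ` {1..n}))"
    by (rule pointwise_Min_eq_weighted_sum)
  have "(INF t\<in>weightings {1..n}. ?G t) \<le> ?G s"
    using s by (rule INF_lower)
  also have "\<dots> \<le> ?L"
    using fixpoint realises by (intro lfp_lowerbound) simp
  finally have "(INF t\<in>weightings {1..n}. ?G t) \<le> ?L" .
  moreover have "?L \<le> (INF t\<in>weightings {1..n}. ?G t)"
    by (intro INF_greatest lfp_pointwise_Min_le_lfp_weighted_sum) simp
  ultimately show ?thesis
    unfolding weightings_def by (rule antisym[rotated])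
qed

end
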